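(* Work in $M^*$ (described below) and suppose $H=\bigcup_{\alpha<\kappa}H_\alpha$ is a $B_2$-filtration of $H$, i.e. a smooth (continuous) ascending chain of pure subgroups $H_\alpha$ with $H_0=0$ such that for every $\alpha<\kappa$, $H_{\alpha+1}=H_\alpha+B_\alpha$ for some finite rank Butler group $B_\alpha$. Then the set $C=\{\delta<\kappa : H_\delta=\langle x_n,y_\beta : n\in\omega,\ \beta<\delta\rangle_*\}$ is a closed unbounded subset of $\kappa$.
   Context: $\langle S\rangle_*$ denotes the purification in $H$ of the subgroup generated by $S$. A finite rank Butler group is a pure subgroup of a finite rank completely decomposable group. $M$ is a countable transitive model of ZFC+GCH, $\kappa\geq\aleph_4$ is regular in $M$, $\mathbb{P}$ is the forcing of finite partial functions $\kappa\times\omega\to2$ ordered by extension (adding $\kappa$ Cohen reals $\eta_\alpha:\omega\to2$), $G$ is $\mathbb{P}$-generic over $M$ and $M^*=M[G]$. Fix primes $p_0<p_1<\cdots$; $W=\bigoplus_{n\in\omega}\mathbb{Q}x_n\oplus\bigoplus_{\alpha<\kappa}\mathbb{Q}y_\alpha$ on independent elements, $F=\bigoplus_n\mathbb{Z}x_n\oplus\bigoplus_{\alpha<\kappa}\mathbb{Z}y_\alpha$, and $H$ is the subgroup of $W$ generated by $F$ and all $p_n^{-1}(y_\alpha-x_n)$ with $\eta_\alpha(n)=1$. A subset $C\subseteq\kappa$ is closed unbounded if every subset of $C$ with supremum $<\kappa$ has its supremum in $C$, and $\sup C=\kappa$. *)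

theory Defs
  imports Complex_Main "HOL-Library.Function_Algebras" "HOL-Computational_Algebra.Primes"
begin

text \<open>Elements of W = (sum of Q x_n) + (sum of Q y_alpha) are represented as
  functions (nat + 'k) => rat (coordinates w.r.t. the independent elements);
  the ordinal kappa is represented by a well-order k on the type 'k.\<close>

type_synonym 'k vec = "nat + 'k \<Rightarrow> rat"

definition xv :: "nat \<Rightarrow> 'k vec" where "xv n = (\<lambda>i. if i = Inl n then 1 else 0)"
definition yv :: "'k \<Rightarrow> 'k vec" where "yv a = (\<lambda>i. if i = Inr a then 1 else 0)"

definition zsmult :: "int \<Rightarrow> ('i \<Rightarrow> rat) \<Rightarrow> ('i \<Rightarrow> rat)" where
  "zsmult n v = (\<lambda>i. of_int n * v i)"

inductive_set gen :: "('i \<Rightarrow> rat) set \<Rightarrow> ('i \<Rightarrow> rat) set" for S where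
  gen_zero: "0 \<in> gen S"
| gen_base: "s \<in> S \<Longrightarrow> s \<in> gen S"
| gen_diff: "a \<in> gen S \<Longrightarrow> b \<in> gen S \<Longrightarrow> a - b \<in> gen S"

definition is_subgroup :: "('i \<Rightarrow> rat) set \<Rightarrow> bool" where
  "is_subgroup A \<longleftrightarrow> 0 \<in> A \<and> (\<forall>a\<in>A. \<forall>b\<in>A. a - b \<in> A)"

definition pure_in :: "('i \<Rightarrow> rat) set \<Rightarrow> ('i \<Rightarrow> rat) set \<Rightarrow> bool" where
  "pure_in G A \<longleftrightarrow> is_subgroup A \<and> A \<subseteq> G \<and>
     (\<forall>g\<in>G. \<forall>n::int. n \<noteq> 0 \<and> zsmult n g \<in> A \<longrightarrow> g \<in> A)"

definition purif :: "('i \<Rightarrow> rat) set \<Rightarrow> ('i \<Rightarrow> rat) set \<Rightarrow> ('i \<Rightarrow> rat) set" where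
  "purif G S = {g \<in> G. \<exists>n::int. n \<noteq> 0 \<and> zsmult n g \<in> gen S}"

definition Hgrp :: "(nat \<Rightarrow> nat) \<Rightarrow> ('k \<Rightarrow> nat \<Rightarrow> bool) \<Rightarrow> 'k vec set" where
  "Hgrp p eta = gen ({xv n | n. True} \<union> {yv a | a. True} \<union>
      {(\<lambda>i. (1 / of_nat (p n)) * (yv a - xv n) i) | a n. eta a n})"

text \<open>Rank-1 torsion-free groups: nonzero subgroups of Q; a finite rank completely
  decomposable group: R_0 + ... + R_(m-1), realised inside nat => rat.\<close>
definition rank1 :: "rat set \<Rightarrow> bool" where
  "rank1 R \<longleftrightarrow> 0 \<in> R \<and> (\<forall>a\<in>R. \<forall>b\<in>R. a - b \<in> R) \<and> R \<noteq> {0}"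

definition cdgrp :: "nat \<Rightarrow> (nat \<Rightarrow> rat set) \<Rightarrow> (nat \<Rightarrow> rat) set" where
  "cdgrp m R = {v. (\<forall>i<m. v i \<in> R i) \<and> (\<forall>i\<ge>m. v i = 0)}"

definition fr_butler :: "('i \<Rightarrow> rat) set \<Rightarrow> bool" where
  "fr_butler B \<longleftrightarrow> is_subgroup B \<and>
     (\<exists>m R (f :: ('i \<Rightarrow> rat) \<Rightarrow> (nat \<Rightarrow> rat)).
        (\<forall>i<m. rank1 (R i)) \<and> inj_on f B \<and>
        (\<forall>a\<in>B. \<forall>b\<in>B. f (a + b) = f a + f b) \<and>
        pure_in (cdgrp m R) (f ` B))"

definition setsum_grp :: "('i \<Rightarrow> rat) set \<Rightarrow> ('i \<Rightarrow> rat) set \<Rightarrow> ('i \<Rightarrow> rat) set" where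
  "setsum_grp A B = {a + b | a b. a \<in> A \<and> b \<in> B}"

definition olt :: "'k rel \<Rightarrow> 'k \<Rightarrow> 'k \<Rightarrow> bool" where
  "olt k a b \<longleftrightarrow> (a, b) \<in> k \<and> a \<noteq> b"

definition is_zero :: "'k rel \<Rightarrow> 'k \<Rightarrow> bool" where
  "is_zero k z \<longleftrightarrow> (\<forall>a. (z, a) \<in> k)"

definition is_succ :: "'k rel \<Rightarrow> 'k \<Rightarrow> 'k \<Rightarrow> bool" where
  "is_succ k a b \<longleftrightarrow> olt k a b \<and> (\<forall>c. olt k a c \<longrightarrow> (b, c) \<in> k)"

definition is_limit :: "'k rel \<Rightarrow> 'k \<Rightarrow> bool" where
  "is_limit k d \<longleftrightarrow> (\<exists>b. olt k b d) \<and> (\<forall>b. olt k b d \<longrightarrow> (\<exists>c. olt k b c \<and> olt k c d))"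

definition is_sup :: "'k rel \<Rightarrow> 'k set \<Rightarrow> 'k \<Rightarrow> bool" where
  "is_sup k D s \<longleftrightarrow> (\<forall>d\<in>D. (d, s) \<in> k) \<and> (\<forall>t. (\<forall>d\<in>D. (d, t) \<in> k) \<longrightarrow> (s, t) \<in> k)"

definition B2_filtration :: "'k rel \<Rightarrow> 'k vec set \<Rightarrow> ('k \<Rightarrow> 'k vec set) \<Rightarrow> bool" where
  "B2_filtration k H Hf \<longleftrightarrow>
     H = (\<Union>a. Hf a) \<and>
     (\<forall>a. pure_in H (Hf a)) \<and>
     (\<forall>a b. (a, b) \<in> k \<longrightarrow> Hf a \<subseteq> Hf b) \<and>
     (\<forall>z. is_zero k z \<longrightarrow> Hf z = {0}) \<and>
     (\<forall>d. is_limit k d \<longrightarrow> Hf d = (\<Union>b\<in>{b. olt k b d}. Hf b)) \<and>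
     (\<forall>a b. is_succ k a b \<longrightarrow> (\<exists>B. fr_butler B \<and> B \<subseteq> H \<and> Hf b = setsum_grp (Hf a) B))"

definition club :: "'k rel \<Rightarrow> 'k set \<Rightarrow> bool" where
  "club k C \<longleftrightarrow>
     (\<forall>D s. D \<subseteq> C \<and> D \<noteq> {} \<and> is_sup k D s \<longrightarrow> s \<in> C) \<and>
     (\<forall>a. \<exists>d\<in>C. olt k a d)"

end

theory Submission
  imports Defs "HOL-Library.Countable_Set_Type"
begin

(* Write P d for the purification of the span of the x_n and the y_b with b < d. Both
   d |-> Hf d and d |-> P d are continuous increasing chains, and each member of one lies in
   a member of the other: P d is the purification of fewer than kappa elements, each lying in
   some pure Hf a; Hf d is assembled from fewer than kappa countable Butler groups, and every
   generator of H lies in P a once a exceeds its index. Since kappa is regular, such small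
   families are bounded. Two interleaved continuous chains agree on a club: closedness is
   continuity, and above any a0 an omega-sequence alternating between the chains has a
   supremum below kappa (kappa is regular and uncountable) at which they coincide. *)

unbundle cardinal_syntax

section \<open>Generated subgroups, purification and Butler groups\<close>

lemma is_subgroup_uminus: "is_subgroup A \<Longrightarrow> a \<in> A \<Longrightarrow> - a \<in> A"
  unfolding is_subgroup_def by (metis diff_0)

lemma is_subgroup_add: "is_subgroup A \<Longrightarrow> a \<in> A \<Longrightarrow> b \<in> A \<Longrightarrow> a + b \<in> A"
  using is_subgroup_uminus unfolding is_subgroup_def by (metis diff_minus_eq_add)

lemma zsmult_one [simp]: "zsmult 1 a = a"
  by (simp add: zsmult_def)

lemma zsmult_zsmult: "zsmult m (zsmult n a) = zsmult (m * n) a"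
  by (simp add: zsmult_def fun_eq_iff)

lemma zsmult_diff: "zsmult n (a - b) = zsmult n a - zsmult n b"
  by (simp add: zsmult_def fun_eq_iff algebra_simps)

lemma is_subgroup_zsmult:
  assumes A: "is_subgroup A" and a: "a \<in> A"
  shows "zsmult n a \<in> A"
proof -
  have nat: "zsmult (int m) a \<in> A" for m
  proof (induction m)
    case 0
    then show ?case using A by (simp add: is_subgroup_def zsmult_def zero_fun_def)
  next
    case (Suc m)
    have "zsmult (int (Suc m)) a = zsmult (int m) a + a"
      by (simp add: zsmult_def fun_eq_iff algebra_simps)
    then show ?case using is_subgroup_add[OF A Suc a] by (simp only:)
  qed
  obtain m where "n = int m \<or> n = - int m"
    by (metis int_cases2)
  moreover have "zsmult (- int m) a = - zsmult (int m) a"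
    by (simp add: zsmult_def fun_eq_iff)
  ultimately show ?thesis
    using nat is_subgroup_uminus[OF A nat] by auto
qed

lemma is_subgroup_UN_directed:
  assumes "\<And>i. is_subgroup (A i)" and "\<And>i j. \<exists>l. A i \<union> A j \<subseteq> A l"
  shows "is_subgroup (\<Union>i. A i)"
  unfolding is_subgroup_def
proof (intro conjI ballI)
  show "0 \<in> (\<Union>i. A i)" using assms(1) unfolding is_subgroup_def by blast
  fix a b assume "a \<in> (\<Union>i. A i)" "b \<in> (\<Union>i. A i)"
  then obtain l where "a \<in> A l" "b \<in> A l" using assms(2) by blast
  then show "a - b \<in> (\<Union>i. A i)" using assms(1) unfolding is_subgroup_def by blast
qed

lemma is_subgroup_gen: "is_subgroup (gen S)"
  unfolding is_subgroup_def by (auto intro: gen.intros)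

lemma gen_least: "is_subgroup A \<Longrightarrow> S \<subseteq> A \<Longrightarrow> gen S \<subseteq> A"
proof
  fix x assume A: "is_subgroup A" "S \<subseteq> A"
  assume "x \<in> gen S" then show "x \<in> A"
    by (induction rule: gen.induct) (use A in \<open>unfold is_subgroup_def, blast\<close>)+
qed

lemma gen_mono: "S \<subseteq> T \<Longrightarrow> gen S \<subseteq> gen T"
  using gen_least[OF is_subgroup_gen] gen_base by blast

lemma gen_finite_subset: "x \<in> gen S \<Longrightarrow> \<exists>F. finite F \<and> F \<subseteq> S \<and> x \<in> gen F"
proof (induction rule: gen.induct)
  case gen_zero
  show ?case by (blast intro: gen.gen_zero)
next
  case (gen_base s)
  then show ?case by (intro exI[of _ "{s}"]) (auto intro: gen.gen_base)
next
  case (gen_diff a b)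
  then obtain F1 F2 where "finite F1" "F1 \<subseteq> S" "a \<in> gen F1" "finite F2" "F2 \<subseteq> S" "b \<in> gen F2"
    by blast
  moreover have "gen F1 \<subseteq> gen (F1 \<union> F2)" "gen F2 \<subseteq> gen (F1 \<union> F2)"
    by (simp_all add: gen_mono)
  ultimately show ?case by (intro exI[of _ "F1 \<union> F2"]) (blast intro: gen.gen_diff)
qed

lemma is_subgroup_purif:
  assumes G: "is_subgroup G"
  shows "is_subgroup (purif G S)"
  unfolding is_subgroup_def
proof (intro conjI ballI)
  have "0 \<in> G" "zsmult 1 0 \<in> gen S"
    using G gen_zero by (simp_all add: is_subgroup_def)
  then show "0 \<in> purif G S"
    unfolding purif_def by (intro CollectI conjI exI[of _ 1]) simp_all
  fix a b assume "a \<in> purif G S" "b \<in> purif G S"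
  then obtain m n where "a \<in> G" "b \<in> G" "m \<noteq> 0" "n \<noteq> 0"
    and ma: "zsmult m a \<in> gen S" and nb: "zsmult n b \<in> gen S"
    unfolding purif_def by blast
  have "zsmult (n * m) (a - b) = zsmult n (zsmult m a) - zsmult m (zsmult n b)"
    by (simp add: zsmult_diff zsmult_zsmult mult.commute)
  also have "\<dots> \<in> gen S"
    using is_subgroup_zsmult[OF is_subgroup_gen ma] is_subgroup_zsmult[OF is_subgroup_gen nb]
    by (rule gen_diff)
  finally have "zsmult (n * m) (a - b) \<in> gen S" .
  moreover have "a - b \<in> G" "n * m \<noteq> 0"
    using G \<open>a \<in> G\<close> \<open>b \<in> G\<close> \<open>m \<noteq> 0\<close> \<open>n \<noteq> 0\<close> by (simp_all add: is_subgroup_def)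
  ultimately show "a - b \<in> purif G S"
    unfolding purif_def by blast
qed

lemma purif_mono: "S \<subseteq> T \<Longrightarrow> purif G S \<subseteq> purif G T"
  unfolding purif_def using gen_mono by blast

lemma purifI: "g \<in> G \<Longrightarrow> n \<noteq> 0 \<Longrightarrow> zsmult n g \<in> gen S \<Longrightarrow> g \<in> purif G S"
  unfolding purif_def by blast

lemma purif_least: "pure_in G A \<Longrightarrow> S \<subseteq> A \<Longrightarrow> purif G S \<subseteq> A"
  unfolding pure_in_def purif_def using gen_least by blast

lemma countable_cdgrp: "countable (cdgrp m R)"
proof (rule countableI')
  show "inj_on (\<lambda>v. map v [0..<m]) (cdgrp m R)"
  proof (rule inj_onI, rule ext)
    fix u v i assume "u \<in> cdgrp m R" "v \<in> cdgrp m R" "map u [0..<m] = map v [0..<m]"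
    then show "u i = v i"
      unfolding cdgrp_def by (cases "i < m") (auto simp: map_eq_conv)
  qed
qed

lemma countable_fr_butler: "fr_butler B \<Longrightarrow> countable B"
proof -
  assume "fr_butler B"
  then obtain m R f where inj: "inj_on f B" and "pure_in (cdgrp m R) (f ` B)"
    unfolding fr_butler_def by blast
  then have "f ` B \<subseteq> cdgrp m R"
    unfolding pure_in_def by blast
  then have "countable (f ` B)"
    using countable_cdgrp countable_subset by blast
  then show "countable B"
    using countable_image_inj_on inj by blast
qed

section \<open>Continuous chains over a regular uncountable cardinal\<close>

definition continuous_chain :: "'k rel \<Rightarrow> ('k \<Rightarrow> 'a set) \<Rightarrow> bool" where
  "continuous_chain k A \<longleftrightarrow>
     (\<forall>a b. (a, b) \<in> k \<longrightarrow> A a \<subseteq> A b) \<and>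
     (\<forall>d. is_limit k d \<longrightarrow> A d = (\<Union>b\<in>{b. olt k b d}. A b))"

locale uncountable_regular_card =
  fixes k :: "'k rel"
  assumes card_order: "Card_order k" and field: "Field k = UNIV"
    and regular: "regularCard k" and uncountable: "natLeq <o k"
begin

lemma well_order: "well_order_on UNIV k"
  using card_order field card_order_on_well_order_on by metis

lemma linear_order: "linear_order_on UNIV k"
  using well_order unfolding well_order_on_def by blast

lemma le_refl: "(a, a) \<in> k"
  using linear_order
  unfolding linear_order_on_def partial_order_on_def preorder_on_def refl_on_def by blast

lemma le_trans: "(a, b) \<in> k \<Longrightarrow> (b, c) \<in> k \<Longrightarrow> (a, c) \<in> k"
  using linear_order
  unfolding linear_order_on_def partial_order_on_def preorder_on_def trans_def by blast

lemma le_antisym: "(a, b) \<in> k \<Longrightarrow> (b, a) \<in> k \<Longrightarrow> a = b"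
  using linear_order unfolding linear_order_on_def partial_order_on_def antisym_def by blast

lemma le_total: "(a, b) \<in> k \<or> (b, a) \<in> k"
  using linear_order le_refl unfolding linear_order_on_def total_on_def by (cases "a = b") auto

lemma not_le_imp_olt: "(a, b) \<notin> k \<Longrightarrow> olt k b a"
  using le_total le_refl unfolding olt_def by blast

lemma olt_le_trans: "olt k a b \<Longrightarrow> (b, c) \<in> k \<Longrightarrow> olt k a c"
  unfolding olt_def using le_trans le_antisym by blast

lemma common_upper_bound: "\<exists>u. (a, u) \<in> k \<and> (b, u) \<in> k"
  using not_le_imp_olt le_refl unfolding olt_def by blast

lemma olt_induct: "(\<And>b. (\<And>a. olt k a b \<Longrightarrow> P a) \<Longrightarrow> P b) \<Longrightarrow> P b"
  using wf_induct_rule[of "k - Id" P b] well_order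
  unfolding well_order_on_def olt_def by blast

lemma infinite_field: "\<not> finite (Field k)"
proof
  assume "finite (Field k)"
  then have "|Field k| <o natLeq"
    using finite_iff_ordLess_natLeq by blast
  then have "k <o natLeq"
    using card_of_Field_ordIso[OF card_order] ordIso_symmetric ordIso_ordLess_trans by blast
  then show False
    using uncountable ordLess_transitive ordLess_irreflexive by blast
qed

lemma exists_olt: "\<exists>b. olt k a b"
  using infinite_Card_order_limit[OF card_order infinite_field] field unfolding olt_def by auto

lemma small_bounded:
  assumes "|K| <o k"
  shows "\<exists>u. \<forall>x\<in>K. (x, u) \<in> k"
proof -
  have "\<not> cofinal K k"
    using assms regular field not_ordLess_ordIso unfolding regularCard_def by blast
  then obtain a where "\<forall>b\<in>K. a = b \<or> (a, b) \<notin> k"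
    unfolding cofinal_def field by blast
  then have "\<forall>b\<in>K. (b, a) \<in> k"
    using le_refl le_total by metis
  then show ?thesis ..
qed

lemma countable_small: "countable K \<Longrightarrow> |K| <o k"
  using countable_card_le_natLeq ordLeq_ordLess_trans uncountable by blast

lemma initial_segment_small: "|{b. olt k b a}| <o k"
proof -
  have "{b. olt k b a} = underS k a"
    unfolding underS_def olt_def by auto
  then show ?thesis
    using card_of_underS[OF card_order] field by simp
qed

lemma Un_small: "|A| <o k \<Longrightarrow> |B| <o k \<Longrightarrow> |A \<union> B| <o k"
  using card_of_Un_ordLess_infinite_Field[OF infinite_field card_order] by blast

lemma image_small: "|A| <o k \<Longrightarrow> |f ` A| <o k"
  using card_of_image ordLeq_ordLess_trans by blast

lemma small_family_bounded_in_chain: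
  assumes mono: "\<And>a b. (a, b) \<in> k \<Longrightarrow> A a \<subseteq> A b" and small: "|I| <o k"
    and bounded: "\<And>i. i \<in> I \<Longrightarrow> \<exists>\<gamma>. X i \<subseteq> A \<gamma>"
  shows "\<exists>u. (\<Union>i\<in>I. X i) \<subseteq> A u"
proof -
  define c where "c i = (SOME \<gamma>. X i \<subseteq> A \<gamma>)" for i
  have c: "X i \<subseteq> A (c i)" if "i \<in> I" for i
    unfolding c_def using bounded[OF that] by (rule someI_ex)
  obtain u where "\<forall>i\<in>I. (c i, u) \<in> k"
    using small_bounded[OF image_small[OF small]] by blast
  then have "(\<Union>i\<in>I. X i) \<subseteq> A u"
    using c mono by blast
  then show ?thesis ..
qed

lemma small_subset_bounded_in_chain:
  assumes mono: "\<And>a b. (a, b) \<in> k \<Longrightarrow> A a \<subseteq> A b" and small: "|X| <o k"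
    and covered: "X \<subseteq> (\<Union>\<gamma>. A \<gamma>)"
  shows "\<exists>u. X \<subseteq> A u"
proof -
  have singletons: "\<exists>\<gamma>. {x} \<subseteq> A \<gamma>" if "x \<in> X" for x
    using that covered by blast
  have "\<exists>u. (\<Union>x\<in>X. {x}) \<subseteq> A u"
    by (rule small_family_bounded_in_chain[of A X "\<lambda>x. {x}"]) (fact mono, fact small, fact singletons)
  then show ?thesis
    by simp
qed

lemma zero_or_succ_or_limit: "is_zero k b \<or> (\<exists>a. is_succ k a b) \<or> is_limit k b"
proof (cases "\<exists>a. olt k a b \<and> (\<forall>c. olt k c b \<longrightarrow> (c, a) \<in> k)")
  case True
  then obtain a where "olt k a b" and amax: "\<forall>c. olt k c b \<longrightarrow> (c, a) \<in> k"
    by blast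
  have "(b, c) \<in> k" if "olt k a c" for c
  proof (rule ccontr)
    assume "(b, c) \<notin> k"
    then have "(c, a) \<in> k"
      using amax not_le_imp_olt by blast
    then show False
      using that le_antisym unfolding olt_def by blast
  qed
  then have "is_succ k a b"
    unfolding is_succ_def using \<open>olt k a b\<close> by blast
  then show ?thesis by blast
next
  case False
  have "is_limit k b" if "\<not> is_zero k b"
  proof -
    have "\<exists>c. olt k x c \<and> olt k c b" if "olt k x b" for x
      using False that not_le_imp_olt by blast
    moreover have "\<exists>x. olt k x b"
      using \<open>\<not> is_zero k b\<close> not_le_imp_olt unfolding is_zero_def by blast
    ultimately show ?thesis
      unfolding is_limit_def by blast
  qed
  then show ?thesis by blast
qed

lemma sup_not_attained:
  assumes sup: "is_sup k D s" and "s \<notin> D"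
  shows "\<forall>d\<in>D. olt k d s" and "\<forall>b. olt k b s \<longrightarrow> (\<exists>d\<in>D. olt k b d)"
proof -
  show "\<forall>d\<in>D. olt k d s"
    using assms unfolding is_sup_def olt_def by blast
  show "\<forall>b. olt k b s \<longrightarrow> (\<exists>d\<in>D. olt k b d)"
  proof (intro allI impI, rule ccontr)
    fix b assume "olt k b s" and "\<not> (\<exists>d\<in>D. olt k b d)"
    then have "\<forall>d\<in>D. (d, b) \<in> k"
      using not_le_imp_olt by blast
    then have "(s, b) \<in> k"
      using sup unfolding is_sup_def by blast
    then show False
      using \<open>olt k b s\<close> le_antisym unfolding olt_def by blast
  qed
qed

lemma increasing_sequence_sup:
  assumes incr: "\<And>n. olt k (a n) (a (Suc n))"
  shows "\<exists>d. (\<forall>n. olt k (a n) d) \<and> (\<forall>b. olt k b d \<longrightarrow> (\<exists>n. olt k b (a n)))"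
proof -
  define U where "U = {u. \<forall>n. (a n, u) \<in> k}"
  have "|range a| <o k"
    by (rule countable_small) simp
  then obtain u where "u \<in> U"
    using small_bounded unfolding U_def by blast
  moreover have "wf (k - Id)"
    using well_order unfolding well_order_on_def by blast
  ultimately obtain d where "d \<in> U" and least: "\<And>y. (y, d) \<in> k - Id \<Longrightarrow> y \<notin> U"
    using wfE_min by metis
  have "olt k (a n) d" for n
    using incr[of n] \<open>d \<in> U\<close> olt_le_trans unfolding U_def by blast
  moreover have "\<exists>n. olt k b (a n)" if "olt k b d" for b
  proof -
    have "b \<notin> U"
      using least that unfolding olt_def by blast
    then show ?thesis
      using not_le_imp_olt unfolding U_def by blast
  qed
  ultimately show ?thesis by blast
qed

lemma continuous_chain_cofinal:
  assumes A: "continuous_chain k A" and "D \<noteq> {}" and below: "\<forall>d\<in>D. olt k d s"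
    and cofinal: "\<forall>b. olt k b s \<longrightarrow> (\<exists>d\<in>D. olt k b d)"
  shows "A s = (\<Union>d\<in>D. A d)"
proof -
  have mono: "(a, b) \<in> k \<Longrightarrow> A a \<subseteq> A b" for a b
    using A unfolding continuous_chain_def by blast
  have "is_limit k s"
    unfolding is_limit_def using assms by blast
  then have lim: "A s = (\<Union>b\<in>{b. olt k b s}. A b)"
    using A unfolding continuous_chain_def by blast
  show ?thesis
  proof
    show "A s \<subseteq> (\<Union>d\<in>D. A d)"
      unfolding lim using cofinal mono unfolding olt_def by blast
    show "(\<Union>d\<in>D. A d) \<subseteq> A s"
      unfolding lim using below by blast
  qed
qed

lemma continuous_chains_agree_at_sup:
  assumes A: "continuous_chain k A" and B: "continuous_chain k B"
    and agree: "\<forall>d\<in>D. A d = B d" and "D \<noteq> {}" and sup: "is_sup k D s"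
  shows "A s = B s"
proof (cases "s \<in> D")
  case False
  note below_cofinal = sup_not_attained[OF sup False]
  have "A s = (\<Union>d\<in>D. A d)" "B s = (\<Union>d\<in>D. B d)"
    using continuous_chain_cofinal[OF _ \<open>D \<noteq> {}\<close> below_cofinal] A B by blast+
  then show ?thesis
    using agree by simp
qed (use agree in blast)

lemma interleaved_continuous_chains_agree_above:
  assumes A: "continuous_chain k A" and B: "continuous_chain k B"
    and AB: "\<And>\<beta>. \<exists>\<gamma>. A \<beta> \<subseteq> B \<gamma>" and BA: "\<And>\<beta>. \<exists>\<gamma>. B \<beta> \<subseteq> A \<gamma>"
  shows "\<exists>d. olt k a0 d \<and> A d = B d"
proof -
  have mono: "A a \<subseteq> A b" "B a \<subseteq> B b" if "(a, b) \<in> k" for a b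
    using A B that unfolding continuous_chain_def by blast+
  have "\<exists>\<gamma>. olt k \<beta> \<gamma> \<and> A \<beta> \<subseteq> B \<gamma> \<and> B \<beta> \<subseteq> A \<gamma>" for \<beta>
  proof -
    obtain g1 g2 g3 where "A \<beta> \<subseteq> B g1" "B \<beta> \<subseteq> A g2" "olt k \<beta> g3"
      using AB BA exists_olt by blast
    moreover obtain u where "(g1, u) \<in> k" "(g2, u) \<in> k"
      using common_upper_bound by blast
    moreover obtain v where "(u, v) \<in> k" "(g3, v) \<in> k"
      using common_upper_bound by blast
    ultimately have "olt k \<beta> v" "A \<beta> \<subseteq> B v" "B \<beta> \<subseteq> A v"
      using mono[OF le_trans] olt_le_trans by blast+
    then show ?thesis by blast
  qed
  then have "\<forall>\<beta>. \<exists>\<gamma>. olt k \<beta> \<gamma> \<and> A \<beta> \<subseteq> B \<gamma> \<and> B \<beta> \<subseteq> A \<gamma>"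
    by blast
  from choice[OF this] obtain F
    where F: "\<forall>\<beta>. olt k \<beta> (F \<beta>) \<and> A \<beta> \<subseteq> B (F \<beta>) \<and> B \<beta> \<subseteq> A (F \<beta>)"
    by blast
  define a where "a n = (F ^^ n) a0" for n
  have a_0: "a 0 = a0" and a_Suc: "a (Suc n) = F (a n)" for n
    unfolding a_def by simp_all
  have "olt k (a n) (a (Suc n))" for n
    using F a_Suc by simp
  then obtain d where below: "\<forall>n. olt k (a n) d" and cofinal: "\<forall>b. olt k b d \<longrightarrow> (\<exists>n. olt k b (a n))"
    using increasing_sequence_sup by blast
  have "range a \<noteq> {}" "\<forall>x\<in>range a. olt k x d" "\<forall>b. olt k b d \<longrightarrow> (\<exists>x\<in>range a. olt k b x)"
    using below cofinal by blast+
  then have A_d: "A d = (\<Union>n. A (a n))" and B_d: "B d = (\<Union>n. B (a n))"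
    using continuous_chain_cofinal[OF A, of "range a" d] continuous_chain_cofinal[OF B, of "range a" d]
    by simp_all
  have "A (a n) \<subseteq> B (a (Suc n))" "B (a n) \<subseteq> A (a (Suc n))" for n
    using F a_Suc by simp_all
  then have "A d \<subseteq> B d" "B d \<subseteq> A d"
    unfolding A_d B_d by blast+
  then have "A d = B d" ..
  moreover have "olt k a0 d"
    using below a_0 by metis
  ultimately show ?thesis
    by blast
qed

lemma club_agreement_of_interleaved_chains:
  assumes "continuous_chain k A" and "continuous_chain k B"
    and "\<And>\<beta>. \<exists>\<gamma>. A \<beta> \<subseteq> B \<gamma>" and "\<And>\<beta>. \<exists>\<gamma>. B \<beta> \<subseteq> A \<gamma>"
  shows "club k {d. A d = B d}"
  unfolding club_def
proof (intro conjI allI impI)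
  fix D s assume "D \<subseteq> {d. A d = B d} \<and> D \<noteq> {} \<and> is_sup k D s"
  then have "\<forall>d\<in>D. A d = B d" "D \<noteq> {}" "is_sup k D s"
    by blast+
  then have "A s = B s"
    by (rule continuous_chains_agree_at_sup[OF assms(1,2)])
  then show "s \<in> {d. A d = B d}"
    by simp
next
  fix a0
  obtain d where "olt k a0 d" "A d = B d"
    using interleaved_continuous_chains_agree_above[OF assms] by blast
  then show "\<exists>d\<in>{d. A d = B d}. olt k a0 d"
    by blast
qed

end

section \<open>The group H\<close>

definition gens_below :: "'k rel \<Rightarrow> 'k \<Rightarrow> 'k vec set" where
  "gens_below k d = {xv n | n. True} \<union> {yv b | b. olt k b d}"

definition Hgrp_gens :: "(nat \<Rightarrow> nat) \<Rightarrow> ('k \<Rightarrow> nat \<Rightarrow> bool) \<Rightarrow> 'k vec set" where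
  "Hgrp_gens p eta = {xv n | n. True} \<union> {yv a | a. True} \<union>
     {(\<lambda>i. (1 / of_nat (p n)) * (yv a - xv n) i) | a n. eta a n}"

lemma Hgrp_eq_gen: "Hgrp p eta = gen (Hgrp_gens p eta)"
  unfolding Hgrp_def Hgrp_gens_def ..

lemma Hgrp_gens_cases:
  assumes "s \<in> Hgrp_gens p eta"
  obtains (x) n where "s = xv n" | (y) a where "s = yv a"
    | (quotient) a n where "s = (\<lambda>i. (1 / of_nat (p n)) * (yv a - xv n) i)"
  using assms unfolding Hgrp_gens_def Un_iff mem_Collect_eq by (elim disjE exE conjE) simp_all

lemma gens_below_subset_Hgrp: "gens_below k d \<subseteq> Hgrp p eta"
  unfolding gens_below_def Hgrp_eq_gen Hgrp_gens_def by (intro subsetI gen_base) blast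

lemma is_subgroup_Hgrp: "is_subgroup (Hgrp p eta)"
  unfolding Hgrp_eq_gen by (rule is_subgroup_gen)

lemma B2_filtrationD:
  assumes "B2_filtration k G Hf"
  shows "G = (\<Union>a. Hf a)" and "pure_in G (Hf a)"
    and "is_zero k z \<Longrightarrow> Hf z = {0}"
    and "is_succ k a b \<Longrightarrow> \<exists>B. fr_butler B \<and> B \<subseteq> G \<and> Hf b = setsum_grp (Hf a) B"
    and "continuous_chain k Hf"
  using assms unfolding B2_filtration_def continuous_chain_def by metis+

context uncountable_regular_card
begin

lemma gens_below_mono: "(a, b) \<in> k \<Longrightarrow> gens_below k a \<subseteq> gens_below k b"
  unfolding gens_below_def using olt_le_trans by blast

lemma gens_below_small: "|gens_below k d| <o k"
proof -
  have "|range xv| <o k"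
    by (rule countable_small) simp
  moreover have "gens_below k d = range xv \<union> yv ` {b. olt k b d}"
    unfolding gens_below_def by blast
  ultimately show ?thesis
    using Un_small[OF _ image_small[OF initial_segment_small]] by simp
qed

lemma finite_subset_gens_below_limit:
  assumes "is_limit k d"
  shows "finite F \<Longrightarrow> F \<subseteq> gens_below k d \<Longrightarrow> \<exists>b. olt k b d \<and> F \<subseteq> gens_below k b"
proof (induction F rule: finite_induct)
  case empty
  then show ?case
    using assms unfolding is_limit_def by blast
next
  case (insert x F)
  then obtain b where b: "olt k b d" "F \<subseteq> gens_below k b"
    by blast
  from insert.prems consider (x) n where "x = xv n" | (y) c where "x = yv c" "olt k c d"
    unfolding gens_below_def by blast
  then show ?case
  proof cases
    case x
    then have "x \<in> gens_below k b"
      unfolding gens_below_def by blast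
    then show ?thesis
      using b by blast
  next
    case y
    then obtain c' where "olt k c c'" "olt k c' d"
      using assms unfolding is_limit_def by blast
    obtain u where u: "(b, u) \<in> k" "(c', u) \<in> k" and "olt k u d"
    proof (cases "(b, c') \<in> k")
      case True
      then show ?thesis using that le_refl \<open>olt k c' d\<close> by blast
    next
      case False
      then show ?thesis using that le_refl \<open>olt k b d\<close> not_le_imp_olt unfolding olt_def by blast
    qed
    have "x \<in> gens_below k u"
      using y \<open>olt k c c'\<close> u(2) olt_le_trans unfolding gens_below_def by blast
    then show ?thesis
      using b(2) gens_below_mono[OF u(1)] \<open>olt k u d\<close> by blast
  qed
qed

lemma continuous_chain_purif: "continuous_chain k (\<lambda>d. purif G (gens_below k d))"
  unfolding continuous_chain_def
proof (intro conjI allI impI)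
  fix a b :: 'k assume "(a, b) \<in> k"
  then show "purif G (gens_below k a) \<subseteq> purif G (gens_below k b)"
    by (intro purif_mono gens_below_mono)
next
  fix d assume lim: "is_limit k d"
  show "purif G (gens_below k d) = (\<Union>b\<in>{b. olt k b d}. purif G (gens_below k b))"
  proof
    show "purif G (gens_below k d) \<subseteq> (\<Union>b\<in>{b. olt k b d}. purif G (gens_below k b))"
    proof
      fix g assume "g \<in> purif G (gens_below k d)"
      then obtain n where g: "g \<in> G" "n \<noteq> 0" "zsmult n g \<in> gen (gens_below k d)"
        unfolding purif_def by blast
      then obtain F where "finite F" "F \<subseteq> gens_below k d" "zsmult n g \<in> gen F"
        using gen_finite_subset by blast
      moreover obtain b where "olt k b d" "F \<subseteq> gens_below k b"
        using finite_subset_gens_below_limit[OF lim] calculation by blast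
      ultimately have "g \<in> purif G (gens_below k b)"
        using g gen_mono unfolding purif_def by blast
      then show "g \<in> (\<Union>b\<in>{b. olt k b d}. purif G (gens_below k b))"
        using \<open>olt k b d\<close> by blast
    qed
    have "purif G (gens_below k b) \<subseteq> purif G (gens_below k d)" if "olt k b d" for b
      using that purif_mono gens_below_mono unfolding olt_def by blast
    then show "(\<Union>b\<in>{b. olt k b d}. purif G (gens_below k b)) \<subseteq> purif G (gens_below k d)"
      by blast
  qed
qed

lemma is_subgroup_UN_purif_gens_below:
  assumes "is_subgroup G"
  shows "is_subgroup (\<Union>\<gamma>. purif G (gens_below k \<gamma>))"
proof (rule is_subgroup_UN_directed)
  show "is_subgroup (purif G (gens_below k \<gamma>))" for \<gamma>
    using assms by (rule is_subgroup_purif)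
  show "\<exists>l. purif G (gens_below k i) \<union> purif G (gens_below k j) \<subseteq> purif G (gens_below k l)" for i j
  proof -
    obtain l where "(i, l) \<in> k" "(j, l) \<in> k"
      using common_upper_bound by blast
    then have "purif G (gens_below k i) \<subseteq> purif G (gens_below k l)"
      "purif G (gens_below k j) \<subseteq> purif G (gens_below k l)"
      by (simp_all add: purif_mono gens_below_mono)
    then show ?thesis
      by blast
  qed
qed

lemma Hgrp_gens_in_purif:
  assumes p: "\<And>n. p n \<noteq> 0" and s: "s \<in> Hgrp_gens p eta"
  shows "\<exists>\<gamma>. s \<in> purif (Hgrp p eta) (gens_below k \<gamma>)"
proof -
  have "s \<in> Hgrp p eta"
    unfolding Hgrp_eq_gen using s by (rule gen_base)
  note purifI = purifI[OF this]
  from s show ?thesis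
  proof (cases rule: Hgrp_gens_cases)
    case (x n)
    have "xv n \<in> gens_below k \<gamma>" for \<gamma>
      unfolding gens_below_def by blast
    then have "zsmult 1 s \<in> gen (gens_below k \<gamma>)" for \<gamma>
      using x by (simp add: gen_base)
    then have "s \<in> purif (Hgrp p eta) (gens_below k \<gamma>)" for \<gamma>
      using purifI[of 1] by simp
    then show ?thesis ..
  next
    case (y a)
    obtain \<gamma> where "olt k a \<gamma>"
      using exists_olt by blast
    then have "yv a \<in> gens_below k \<gamma>"
      unfolding gens_below_def by blast
    then have "zsmult 1 s \<in> gen (gens_below k \<gamma>)"
      using y by (simp add: gen_base)
    then have "s \<in> purif (Hgrp p eta) (gens_below k \<gamma>)"
      using purifI[of 1] by simp
    then show ?thesis ..
  next
    case (quotient a n)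
    obtain \<gamma> where "olt k a \<gamma>"
      using exists_olt by blast
    then have "yv a \<in> gens_below k \<gamma>" "xv n \<in> gens_below k \<gamma>"
      unfolding gens_below_def by blast+
    then have "yv a - xv n \<in> gen (gens_below k \<gamma>)"
      by (intro gen_diff gen_base)
    moreover have "zsmult (int (p n)) s = yv a - xv n"
      unfolding quotient zsmult_def using p[of n] by (simp add: fun_eq_iff)
    ultimately have "s \<in> purif (Hgrp p eta) (gens_below k \<gamma>)"
      using purifI[of "int (p n)"] p[of n] by simp
    then show ?thesis ..
  qed
qed

lemma Hgrp_subset_UN_purif:
  assumes "\<And>n. p n \<noteq> 0"
  shows "Hgrp p eta \<subseteq> (\<Union>\<gamma>. purif (Hgrp p eta) (gens_below k \<gamma>))"
proof -
  have "Hgrp_gens p eta \<subseteq> (\<Union>\<gamma>. purif (Hgrp p eta) (gens_below k \<gamma>))"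
    using Hgrp_gens_in_purif[of p, OF assms] by blast
  then have "gen (Hgrp_gens p eta) \<subseteq> (\<Union>\<gamma>. purif (Hgrp p eta) (gens_below k \<gamma>))"
    by (rule gen_least[OF is_subgroup_UN_purif_gens_below[OF is_subgroup_Hgrp]])
  then show ?thesis
    unfolding Hgrp_eq_gen[symmetric] .
qed

lemma purif_subset_filtration:
  assumes B2: "B2_filtration k (Hgrp p eta) Hf"
  shows "\<exists>\<gamma>. purif (Hgrp p eta) (gens_below k \<beta>) \<subseteq> Hf \<gamma>"
proof -
  have mono: "(a, b) \<in> k \<Longrightarrow> Hf a \<subseteq> Hf b" for a b
    using B2_filtrationD(5)[OF B2] unfolding continuous_chain_def by blast
  have "gens_below k \<beta> \<subseteq> (\<Union>a. Hf a)"
    using gens_below_subset_Hgrp[of k \<beta> p eta] unfolding B2_filtrationD(1)[OF B2] .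
  then obtain u where "gens_below k \<beta> \<subseteq> Hf u"
    using small_subset_bounded_in_chain[of Hf, OF mono gens_below_small] by blast
  then have "purif (Hgrp p eta) (gens_below k \<beta>) \<subseteq> Hf u"
    by (rule purif_least[OF B2_filtrationD(2)[OF B2]])
  then show ?thesis ..
qed

lemma setsum_fr_butler_subset_purif:
  assumes p: "\<And>n. p n \<noteq> 0" and A: "A \<subseteq> purif (Hgrp p eta) (gens_below k g)"
    and B: "fr_butler B" "B \<subseteq> Hgrp p eta"
  shows "\<exists>v. setsum_grp A B \<subseteq> purif (Hgrp p eta) (gens_below k v)"
proof -
  let ?P = "\<lambda>\<gamma>. purif (Hgrp p eta) (gens_below k \<gamma>)"
  have P_mono: "(a, b) \<in> k \<Longrightarrow> ?P a \<subseteq> ?P b" for a b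
    by (rule purif_mono[OF gens_below_mono])
  have "\<exists>u. B \<subseteq> ?P u"
  proof (rule small_subset_bounded_in_chain)
    show "(a, b) \<in> k \<Longrightarrow> ?P a \<subseteq> ?P b" for a b
      by (fact P_mono)
    show "|B| <o k"
      using countable_fr_butler[OF B(1)] by (rule countable_small)
    show "B \<subseteq> (\<Union>\<gamma>. ?P \<gamma>)"
      using B(2) Hgrp_subset_UN_purif[of p, OF p] by (rule order_trans)
  qed
  then obtain u where u: "B \<subseteq> ?P u" ..
  obtain v where "(g, v) \<in> k" "(u, v) \<in> k"
    using common_upper_bound by blast
  then have "A \<subseteq> ?P v" "B \<subseteq> ?P v"
    using A u P_mono by blast+
  then have "setsum_grp A B \<subseteq> ?P v"
    unfolding setsum_grp_def using is_subgroup_add[OF is_subgroup_purif[OF is_subgroup_Hgrp]] by blast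
  then show ?thesis ..
qed

lemma filtration_subset_purif:
  assumes B2: "B2_filtration k (Hgrp p eta) Hf" and p: "\<And>n. p n \<noteq> 0"
  shows "\<exists>\<gamma>. Hf \<beta> \<subseteq> purif (Hgrp p eta) (gens_below k \<gamma>)"
proof (induction \<beta> rule: olt_induct)
  let ?P = "\<lambda>\<gamma>. purif (Hgrp p eta) (gens_below k \<gamma>)"
  have P_mono: "(a, b) \<in> k \<Longrightarrow> ?P a \<subseteq> ?P b" for a b
    by (rule purif_mono[OF gens_below_mono])
  have P_subgroup: "is_subgroup (?P \<gamma>)" for \<gamma>
    by (rule is_subgroup_purif[OF is_subgroup_Hgrp])
  fix \<beta> assume IH: "\<And>a. olt k a \<beta> \<Longrightarrow> \<exists>\<gamma>. Hf a \<subseteq> ?P \<gamma>"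
  consider (zero) "is_zero k \<beta>" | (succ) a where "is_succ k a \<beta>" | (limit) "is_limit k \<beta>"
    using zero_or_succ_or_limit by blast
  then show "\<exists>\<gamma>. Hf \<beta> \<subseteq> ?P \<gamma>"
  proof cases
    case zero
    have "0 \<in> ?P \<beta>"
      using P_subgroup unfolding is_subgroup_def by blast
    then have "Hf \<beta> \<subseteq> ?P \<beta>"
      using B2_filtrationD(3)[OF B2 zero] by simp
    then show ?thesis ..
  next
    case succ
    then obtain B where "fr_butler B" "B \<subseteq> Hgrp p eta" and Hf_\<beta>: "Hf \<beta> = setsum_grp (Hf a) B"
      using B2_filtrationD(4)[OF B2] by blast
    moreover obtain g where "Hf a \<subseteq> ?P g"
      using IH succ unfolding is_succ_def by blast
    ultimately show ?thesis
      unfolding Hf_\<beta> by (intro setsum_fr_butler_subset_purif[of p] p)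
  next
    case limit
    have "\<exists>u. (\<Union>b\<in>{b. olt k b \<beta>}. Hf b) \<subseteq> ?P u"
    proof (rule small_family_bounded_in_chain)
      show "(a, b) \<in> k \<Longrightarrow> ?P a \<subseteq> ?P b" for a b
        by (fact P_mono)
      show "|{b. olt k b \<beta>}| <o k"
        by (rule initial_segment_small)
      show "\<exists>\<gamma>. Hf b \<subseteq> ?P \<gamma>" if "b \<in> {b. olt k b \<beta>}" for b
        using that IH by blast
    qed
    moreover have "Hf \<beta> = (\<Union>b\<in>{b. olt k b \<beta>}. Hf b)"
      using B2_filtrationD(5)[OF B2] limit unfolding continuous_chain_def by blast
    ultimately show ?thesis
      by (simp only:)
  qed
qed

end

theorem lemma5p2:
  fixes k :: "'k rel" and p :: "nat \<Rightarrow> nat" and eta :: "'k \<Rightarrow> nat \<Rightarrow> bool"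
    and Hf :: "'k \<Rightarrow> 'k vec set"
  assumes "Card_order k" and "Field k = UNIV" and "regularCard k"
    and "(cardSuc (cardSuc (cardSuc (cardSuc natLeq))), k) \<in> ordLeq"
    and "strict_mono p" and "\<forall>n. prime (p n)"
    and "B2_filtration k (Hgrp p eta) Hf"
  shows "club k {d. Hf d = purif (Hgrp p eta) ({xv n | n. True} \<union> {yv b | b. olt k b d})}"
proof -
  have "natLeq <o k"
    using assms(1,4)
    by (meson cardSuc_ordLess_ordLeq ordLess_imp_ordLeq cardSuc_Card_order natLeq_Card_order)
  then interpret uncountable_regular_card k
    using assms(1-3) by unfold_locales
  \<comment> \<open>The only property of p that is used.\<close>
  have p: "p n \<noteq> 0" for n
    using assms(6) not_prime_0 by metis
  have "club k {d. Hf d = purif (Hgrp p eta) (gens_below k d)}"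
    using club_agreement_of_interleaved_chains[OF B2_filtrationD(5)[OF assms(7)] continuous_chain_purif]
      filtration_subset_purif[OF assms(7) p] purif_subset_filtration[OF assms(7)]
    by blast
  then show ?thesis
    unfolding gens_below_def .
qed

end
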